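(* Let $a \ge 2$ be even and $b \ge 2$ be an integer such that $a \equiv 2 \pmod 4$ or $b$ is even. Then $R_\mathrm{cyc}(M_a^\mathrm{nest}, S_b) \ge a + b - 2$, where $S_b$ is any star graph of order $b$.
   Context: All graphs are finite, simple and undirected, and a graph of order $n$ has vertex set $\{0,1,\ldots,n-1\}$; $K_n$ is the complete graph on $\{0,\ldots,n-1\}$. A $2$-edge-coloring of $K_n$ assigns each edge a color in $\{1,2\}$. For a graph $H$ and such a coloring, an embedding of $H$ in color $j$ is an injective map $\varphi\colon V(H)\to V(K_n)$ such that for every edge $uv$ of $H$ the edge $\{\varphi(u),\varphi(v)\}$ has color $j$; it is increasing up to a cyclic permutation if there exists $t\in V(H)$ such that $(\varphi(t),\ldots,\varphi(|H|-1),\varphi(0),\ldots,\varphi(t-1))$ is increasing. The cyclic Ramsey number $R_\mathrm{cyc}(H_1,H_2)$ is the smallest $n$ such that every $2$-edge-coloring of $K_n$ admits an embedding of $H_1$ in color $1$ or of $H_2$ in color $2$ that is increasing up to a cyclic permutation. For even $n\ge2$, the nested matching $M_n^\mathrm{nest}$ is the graph of order $n$ whose edges are $\{v,n-1-v\}$ for $0\le v\le n/2-1$. A star graph of order $n$ is a graph on $\{0,\ldots,n-1\}$ in which one vertex (the center, arbitrary) is adjacent to all others and there are no other edges. *)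

theory Defs
  imports Main
begin

text \<open>A graph of order h is represented by h together with its edge set E, a set of
  2-element subsets of {0..<h}.\<close>

definition two_coloring :: "nat \<Rightarrow> (nat set \<Rightarrow> nat) \<Rightarrow> bool" where
  "two_coloring n c \<longleftrightarrow> (\<forall>u v. u < n \<longrightarrow> v < n \<longrightarrow> u \<noteq> v \<longrightarrow> c {u, v} \<in> {1, 2})"

definition cyc_increasing :: "nat \<Rightarrow> (nat \<Rightarrow> nat) \<Rightarrow> bool" where
  "cyc_increasing h \<phi> \<longleftrightarrow>
     (\<exists>t < h. \<forall>i j. i < j \<longrightarrow> j < h \<longrightarrow> \<phi> ((t + i) mod h) < \<phi> ((t + j) mod h))"

definition embedding :: "nat \<Rightarrow> (nat set \<Rightarrow> nat) \<Rightarrow> nat \<Rightarrow> nat set set \<Rightarrow> nat \<Rightarrow> (nat \<Rightarrow> nat) \<Rightarrow> bool" where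
  "embedding n c h E j \<phi> \<longleftrightarrow>
     inj_on \<phi> {0..<h} \<and> \<phi> ` {0..<h} \<subseteq> {0..<n} \<and> (\<forall>e \<in> E. c (\<phi> ` e) = j)"

definition Rcyc :: "nat \<Rightarrow> nat set set \<Rightarrow> nat \<Rightarrow> nat set set \<Rightarrow> nat" where
  "Rcyc h1 E1 h2 E2 = (LEAST n. \<forall>c. two_coloring n c \<longrightarrow>
      (\<exists>\<phi>. embedding n c h1 E1 1 \<phi> \<and> cyc_increasing h1 \<phi>) \<or>
      (\<exists>\<phi>. embedding n c h2 E2 2 \<phi> \<and> cyc_increasing h2 \<phi>))"

definition nested_matching :: "nat \<Rightarrow> nat set set" where
  "nested_matching n = {{v, n - 1 - v} | v. v < n div 2}"

definition is_star :: "nat \<Rightarrow> nat set set \<Rightarrow> bool" where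
  "is_star b E \<longleftrightarrow> (\<exists>z < b. E = {{z, v} | v. v < b \<and> v \<noteq> z})"

end

theory Submission
  imports Defs "HOL-Library.Ramsey"
begin

(* Place the n = a + b - 3 vertices of K_n on a cycle and colour an edge by the circular distance
   of its endpoints. If a = 4m + 2, colour 1 means distance at most 2m; if a = 4m and b = 2k,
   colour 1 means distance at least k. In both colourings every vertex has at most b - 2
   neighbours of colour 2, so there is no star S_b of colour 2.
   A cyclically increasing embedding of the a-cycle 0, ..., a-1 preserves cyclic order, hence
   it does not shrink circular distances, and the a arcs between cyclically consecutive images
   add up to n. For a = 4m + 2 the matching edge {m, 3m + 1} joins antipodal vertices of the
   a-cycle, so its image has distance at least 2m + 1. For a = 4m the matching edges {2m - 1, 2m}
   and {4m - 1, 0} are two of the a arcs; both images have length at least k, which forces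
   n >= 2k + a - 2.
   Since Rcyc is defined as a least element, the bound also needs the existence of some valid N;
   this is Ramsey's theorem, as a monochromatic clique carries an increasing copy of any graph. *)

section \<open>Existence of cyclic Ramsey numbers\<close>

definition simple_graph :: "nat \<Rightarrow> nat set set \<Rightarrow> bool" where
  "simple_graph h E \<longleftrightarrow> (\<forall>e\<in>E. \<exists>x y. e = {x, y} \<and> x \<noteq> y \<and> x < h \<and> y < h)"

lemma simple_graph_nested_matching: "simple_graph a (nested_matching a)"
  unfolding simple_graph_def nested_matching_def
proof clarify
  fix v assume "v < a div 2"
  then show "\<exists>x y. {v, a - 1 - v} = {x, y} \<and> x \<noteq> y \<and> x < a \<and> y < a"
    by (intro exI[of _ v] exI[of _ "a - 1 - v"]) auto
qed

lemma simple_graph_star: "is_star b S \<Longrightarrow> simple_graph b S"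
  unfolding simple_graph_def is_star_def by blast

lemma monochromatic_set_embedding:
  assumes "simple_graph h E" "0 < h" "R \<subseteq> {0..<n}" "card R = h"
    and mono: "\<forall>x\<in>R. \<forall>y\<in>R. x \<noteq> y \<longrightarrow> c {x, y} = j"
  shows "\<exists>\<phi>. embedding n c h E j \<phi> \<and> cyc_increasing h \<phi>"
proof -
  define xs where "xs = sorted_list_of_set R"
  have "finite R" using assms(3) finite_subset by blast
  then have len: "length xs = h" and set_xs: "set xs = R" and "sorted_wrt (<) xs"
    using assms(4) by (simp_all add: xs_def)
  then have less: "xs ! i < xs ! k" if "i < k" "k < h" for i k
    using that by (simp add: sorted_wrt_nth_less)
  have inj: "inj_on ((!) xs) {0..<h}"
    by (rule inj_on_nth) (simp_all add: assms(4) xs_def)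
  have mem: "xs ! i \<in> R" if "i < h" for i
    using len set_xs that nth_mem by blast
  have "(!) xs ` {0..<h} \<subseteq> {0..<n}"
    using mem assms(3) by auto
  moreover have "\<forall>e\<in>E. c ((!) xs ` e) = j"
  proof
    fix e assume "e \<in> E"
    obtain x y where "e = {x, y}" "x \<noteq> y" "x < h" "y < h"
      using assms(1) \<open>e \<in> E\<close> unfolding simple_graph_def by blast
    moreover from this have "xs ! x \<noteq> xs ! y" using inj by (simp add: inj_on_eq_iff)
    ultimately show "c ((!) xs ` e) = j" using mem mono by simp
  qed
  moreover have "cyc_increasing h ((!) xs)"
    unfolding cyc_increasing_def using assms(2) less by (intro exI[of _ 0]) auto
  ultimately show ?thesis
    using inj unfolding embedding_def by blast
qed

lemma cyclic_ramsey_exists: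
  assumes "simple_graph h1 E1" "0 < h1" "simple_graph h2 E2" "0 < h2"
  shows "\<exists>N. \<forall>c. two_coloring N c \<longrightarrow>
      (\<exists>\<phi>. embedding N c h1 E1 1 \<phi> \<and> cyc_increasing h1 \<phi>) \<or>
      (\<exists>\<phi>. embedding N c h2 E2 2 \<phi> \<and> cyc_increasing h2 \<phi>)"
proof -
  obtain N where N: "\<forall>(V::nat set) E. finite V \<and> N \<le> card V \<longrightarrow>
      (\<exists>R \<subseteq> V. card R = h1 \<and> clique R E \<or> card R = h2 \<and> indep R E)"
    using ramsey2 by blast
  have "(\<exists>\<phi>. embedding N c h1 E1 1 \<phi> \<and> cyc_increasing h1 \<phi>) \<or>
      (\<exists>\<phi>. embedding N c h2 E2 2 \<phi> \<and> cyc_increasing h2 \<phi>)"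
    if "two_coloring N c" for c
  proof -
    obtain R where R: "R \<subseteq> {0..<N}"
      and "card R = h1 \<and> clique R {e. c e = 1} \<or> card R = h2 \<and> indep R {e. c e = 1}"
      using N[rule_format, of "{0..<N}" "{e. c e = 1}"] by auto
    then consider "card R = h1" "clique R {e. c e = 1}" | "card R = h2" "indep R {e. c e = 1}"
      by blast
    then show ?thesis
    proof cases
      case 1
      then have "\<forall>x\<in>R. \<forall>y\<in>R. x \<noteq> y \<longrightarrow> c {x, y} = 1"
        unfolding clique_def by simp
      then show ?thesis using monochromatic_set_embedding[OF assms(1,2) R] 1 by blast
    next
      case 2
      have "\<forall>x\<in>R. \<forall>y\<in>R. x \<noteq> y \<longrightarrow> c {x, y} = 2"
      proof (intro ballI impI)
        fix x y assume "x \<in> R" "y \<in> R" "x \<noteq> y"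
        then have "c {x, y} \<noteq> 1" "x < N" "y < N"
          using 2 R unfolding indep_def by auto
        then show "c {x, y} = 2"
          using \<open>two_coloring N c\<close> \<open>x \<noteq> y\<close> unfolding two_coloring_def by auto
      qed
      then show ?thesis using monochromatic_set_embedding[OF assms(3,4) R] 2 by blast
    qed
  qed
  then show ?thesis by blast
qed

definition bad_coloring ::
    "nat \<Rightarrow> (nat set \<Rightarrow> nat) \<Rightarrow> nat \<Rightarrow> nat set set \<Rightarrow> nat \<Rightarrow> nat set set \<Rightarrow> bool" where
  "bad_coloring n c h1 E1 h2 E2 \<longleftrightarrow> two_coloring n c
    \<and> (\<nexists>\<phi>. embedding n c h1 E1 1 \<phi> \<and> cyc_increasing h1 \<phi>)
    \<and> (\<nexists>\<phi>. embedding n c h2 E2 2 \<phi> \<and> cyc_increasing h2 \<phi>)"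

lemma embedding_mono: "embedding m c h E j \<phi> \<Longrightarrow> m \<le> n \<Longrightarrow> embedding n c h E j \<phi>"
  unfolding embedding_def by auto

lemma less_Rcyc:
  assumes "simple_graph h1 E1" "0 < h1" "simple_graph h2 E2" "0 < h2"
    and bad: "bad_coloring n c h1 E1 h2 E2"
  shows "n < Rcyc h1 E1 h2 E2"
proof (rule ccontr)
  define N where "N = Rcyc h1 E1 h2 E2"
  assume "\<not> n < Rcyc h1 E1 h2 E2"
  then have "N \<le> n" by (simp add: N_def)
  then have "two_coloring N c"
    using bad unfolding bad_coloring_def two_coloring_def by simp
  moreover have "\<forall>c. two_coloring N c \<longrightarrow>
      (\<exists>\<phi>. embedding N c h1 E1 1 \<phi> \<and> cyc_increasing h1 \<phi>) \<or>
      (\<exists>\<phi>. embedding N c h2 E2 2 \<phi> \<and> cyc_increasing h2 \<phi>)"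
    unfolding N_def Rcyc_def by (rule LeastI_ex) (rule cyclic_ramsey_exists[OF assms(1-4)])
  ultimately show False
    using bad embedding_mono[OF _ \<open>N \<le> n\<close>] unfolding bad_coloring_def by blast
qed

section \<open>Distances on a cycle\<close>

definition fwd_dist :: "nat \<Rightarrow> nat \<Rightarrow> nat \<Rightarrow> nat" where
  "fwd_dist n x y = nat ((int y - int x) mod int n)"

definition circ_dist :: "nat \<Rightarrow> nat \<Rightarrow> nat \<Rightarrow> nat" where
  "circ_dist n x y = min (fwd_dist n x y) (fwd_dist n y x)"

lemma fwd_dist_self [simp]: "fwd_dist n x x = 0"
  by (simp add: fwd_dist_def)

lemma fwd_dist_of_le: "x \<le> y \<Longrightarrow> y < n \<Longrightarrow> fwd_dist n x y = y - x"
  by (simp add: fwd_dist_def)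

lemma fwd_dist_of_gt: "y < x \<Longrightarrow> x < n \<Longrightarrow> fwd_dist n x y = n - (x - y)"
  using mod_pos_pos_trivial[of "int y - int x + int n" "int n"] by (simp add: fwd_dist_def)

lemma fwd_dist_less_modulus: "0 < n \<Longrightarrow> fwd_dist n x y < n"
  by (simp add: fwd_dist_def nat_less_iff)

lemma fwd_dist_rotate: "fwd_dist n ((t + x) mod n) ((t + y) mod n) = fwd_dist n x y"
  by (simp add: fwd_dist_def of_nat_mod mod_diff_eq)

lemma add_fwd_dist_mod: "y < n \<Longrightarrow> (x + fwd_dist n x y) mod n = y"
proof -
  assume "y < n"
  then have "int (fwd_dist n x y) = (int y - int x) mod int n"
    by (simp add: fwd_dist_def)
  then have "int ((x + fwd_dist n x y) mod n) = (int x + (int y - int x) mod int n) mod int n"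
    by (simp add: of_nat_mod)
  also have "\<dots> = int y"
    using \<open>y < n\<close> by (simp add: mod_add_right_eq)
  finally show ?thesis
    by (simp only: of_nat_eq_iff)
qed

lemma inj_on_fwd_dist: "inj_on (fwd_dist n x) {..<n}"
  by (rule inj_onI) (metis add_fwd_dist_mod lessThan_iff)

lemma fwd_dist_swap:
  assumes "x \<noteq> y" "x < n" "y < n"
  shows "fwd_dist n y x = n - fwd_dist n x y"
  using assms by (cases "x < y") (simp_all add: fwd_dist_of_le fwd_dist_of_gt)

lemma fwd_dist_Suc_mod: "2 \<le> h \<Longrightarrow> fwd_dist h i (Suc i mod h) = 1"
  by (simp add: fwd_dist_def of_nat_mod mod_diff_left_eq)

lemma circ_dist_commute: "circ_dist n x y = circ_dist n y x"
  by (simp add: circ_dist_def min.commute)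

lemma circ_dist_le_fwd_dist: "circ_dist n x y \<le> fwd_dist n x y"
  by (simp add: circ_dist_def)

lemma circ_dist_eq_min:
  "x \<noteq> y \<Longrightarrow> x < n \<Longrightarrow> y < n \<Longrightarrow> circ_dist n x y = min (fwd_dist n x y) (n - fwd_dist n x y)"
  using fwd_dist_swap[of x y n] by (simp add: circ_dist_def)

section \<open>Cyclically increasing maps\<close>

lemma cyc_increasing_rotation:
  assumes "cyc_increasing h \<phi>"
  obtains t where "t < h" "strict_mono_on {..<h} (\<lambda>i. \<phi> ((t + i) mod h))"
  using assms unfolding cyc_increasing_def by (auto intro!: strict_mono_onI)

lemma strict_mono_on_add_diff_le:
  fixes q :: "nat \<Rightarrow> nat"
  assumes "strict_mono_on {..<h} q" "i \<le> j" "j < h"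
  shows "q i + (j - i) \<le> q j"
  using assms(2,3)
proof (induction j rule: dec_induct)
  case base
  then show ?case by simp
next
  case (step k)
  moreover have "q k < q (Suc k)"
    using strict_mono_onD[OF assms(1)] step.prems by simp
  ultimately show ?case by simp
qed

lemma mod_rotate_inverse:
  fixes t u :: nat
  assumes "t < h" "u < h"
  shows "(t + (u + h - t) mod h) mod h = u" and "((t + u) mod h + h - t) mod h = u"
proof -
  show "(t + (u + h - t) mod h) mod h = u"
    using assms by (simp add: mod_add_right_eq)
  show "((t + u) mod h + h - t) mod h = u"
    using assms by (cases "t + u < h") (simp_all add: mod_if)
qed

lemma cyc_increasing_fwd_dist_mono:
  assumes "cyc_increasing h \<phi>" "\<phi> ` {0..<h} \<subseteq> {0..<n}" "u < h" "v < h"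
  shows "fwd_dist h u v \<le> fwd_dist n (\<phi> u) (\<phi> v)"
proof -
  obtain t where t: "t < h" and mono: "strict_mono_on {..<h} (\<lambda>i. \<phi> ((t + i) mod h))"
    using assms(1) by (rule cyc_increasing_rotation)
  define q where "q i = \<phi> ((t + i) mod h)" for i
  have q_less: "q i < n" if "i < h" for i
    using assms(2) t that unfolding q_def by (auto simp: image_subset_iff)
  have gap: "q i + (j - i) \<le> q j" if "i \<le> j" "j < h" for i j
    using strict_mono_on_add_diff_le[OF mono that] unfolding q_def .
  have rotated: "fwd_dist h i j \<le> fwd_dist n (q i) (q j)" if "i < h" "j < h" for i j
  proof (cases i j rule: linorder_cases)
    case less
    then show ?thesis
      using gap[of i j] q_less that by (simp add: fwd_dist_of_le)
  next
    case equal
    then show ?thesis by simp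
  next
    case greater
    have "q j < q i"
      using gap[of j i] greater that by simp
    moreover have "q 0 + j \<le> q j" "q i + (h - 1 - i) < n"
      using gap[of 0 j] gap[of i "h - 1"] q_less[of "h - 1"] that by fastforce+
    ultimately show ?thesis
      using greater that q_less[of i] by (simp add: fwd_dist_of_gt)
  qed
  define i j where "i = (u + h - t) mod h" and "j = (v + h - t) mod h"
  have "fwd_dist h u v = fwd_dist h ((t + i) mod h) ((t + j) mod h)"
    using mod_rotate_inverse(1) t assms(3,4) by (simp add: i_def j_def)
  also have "\<dots> = fwd_dist h i j"
    by (rule fwd_dist_rotate)
  also have "\<dots> \<le> fwd_dist n (q i) (q j)"
    using rotated t by (simp add: i_def j_def)
  also have "\<dots> = fwd_dist n (\<phi> u) (\<phi> v)"
    using mod_rotate_inverse(1) t assms(3,4) by (simp add: q_def i_def j_def)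
  finally show ?thesis .
qed

lemma cyc_increasing_circ_dist_mono:
  assumes "cyc_increasing h \<phi>" "\<phi> ` {0..<h} \<subseteq> {0..<n}" "u < h" "v < h"
  shows "circ_dist h u v \<le> circ_dist n (\<phi> u) (\<phi> v)"
  unfolding circ_dist_def
  using cyc_increasing_fwd_dist_mono[OF assms] cyc_increasing_fwd_dist_mono[OF assms(1,2,4,3)]
  by (rule min.mono)

lemma sum_lessThan_rotate:
  fixes t h :: nat
  assumes "t < h"
  shows "(\<Sum>i<h. f ((t + i) mod h)) = (\<Sum>i<h. f i)"
  by (rule sum.reindex_bij_witness[of _ "\<lambda>i. (i + h - t) mod h" "\<lambda>i. (t + i) mod h"])
    (use assms mod_rotate_inverse in auto)

lemma sum_lessThan_telescope_nat:
  fixes q :: "nat \<Rightarrow> nat"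
  assumes "\<And>p. p < l \<Longrightarrow> q p \<le> q (Suc p)"
  shows "(\<Sum>p<l. q (Suc p) - q p) = q l - q 0"
proof -
  have "int (\<Sum>p<l. q (Suc p) - q p) = (\<Sum>p<l. int (q (Suc p)) - int (q p))"
    using assms by simp
  also have "\<dots> = int (q l) - int (q 0)"
    by (rule sum_lessThan_telescope)
  finally show ?thesis
    by arith
qed

lemma sum_lessThan_two_terms_le:
  fixes G :: "nat \<Rightarrow> nat"
  assumes "i \<noteq> j" "i < h" "j < h" "\<And>p. p < h \<Longrightarrow> 1 \<le> G p"
  shows "G i + G j + (h - 2) \<le> (\<Sum>p<h. G p)"
proof -
  have "of_nat (card ({..<h} - {i, j})) * 1 \<le> (\<Sum>p\<in>{..<h} - {i, j}. G p)"
    by (rule sum_bounded_below) (use assms(4) in auto)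
  moreover have "card ({..<h} - {i, j}) = h - 2"
    using assms(1-3) by (simp add: card_Diff_subset)
  moreover have "(\<Sum>p<h. G p) = (\<Sum>p\<in>{..<h} - {i, j}. G p) + (\<Sum>p\<in>{i, j}. G p)"
    using assms(2,3) by (intro sum.subset_diff) auto
  ultimately show ?thesis
    using assms(1) by simp
qed

lemma cyc_increasing_fwd_dist_sum:
  assumes "cyc_increasing h \<phi>" "\<phi> ` {0..<h} \<subseteq> {0..<n}" "2 \<le> h"
  shows "(\<Sum>i<h. fwd_dist n (\<phi> i) (\<phi> (Suc i mod h))) = n"
proof -
  obtain t where t: "t < h" and mono: "strict_mono_on {..<h} (\<lambda>i. \<phi> ((t + i) mod h))"
    using assms(1) by (rule cyc_increasing_rotation)
  define q where "q i = \<phi> ((t + i) mod h)" for i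
  have q_less: "q i < n" if "i < h" for i
    using assms(2) t that unfolding q_def by (auto simp: image_subset_iff)
  have q_step: "q i < q (Suc i)" if "Suc i < h" for i
    using strict_mono_onD[OF mono, of i "Suc i"] that unfolding q_def by simp
  obtain l where l: "h = Suc l" "0 < l"
    using assms(3) by (intro that[of "h - 1"]) auto
  have "q 0 < q l"
    using strict_mono_onD[OF mono, of 0 l] l unfolding q_def by simp
  have "Suc ((t + p) mod h) mod h = (t + Suc p mod h) mod h" for p
    by (simp add: mod_Suc_eq mod_add_right_eq)
  then have "(\<Sum>i<h. fwd_dist n (\<phi> i) (\<phi> (Suc i mod h)))
      = (\<Sum>p<h. fwd_dist n (q p) (q (Suc p mod h)))"
    using sum_lessThan_rotate[OF t, of "\<lambda>i. fwd_dist n (\<phi> i) (\<phi> (Suc i mod h))"]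
    by (simp add: q_def)
  also have "\<dots> = (\<Sum>p<l. q (Suc p) - q p) + fwd_dist n (q l) (q 0)"
    using q_step q_less l by (simp add: fwd_dist_of_le less_imp_le)
  also have "(\<Sum>p<l. q (Suc p) - q p) = q l - q 0"
    using q_step l by (intro sum_lessThan_telescope_nat) (simp add: less_imp_le)
  also have "fwd_dist n (q l) (q 0) = n - (q l - q 0)"
    using \<open>q 0 < q l\<close> q_less l by (simp add: fwd_dist_of_gt)
  finally show ?thesis
    using q_less[of l] l by simp
qed

section \<open>Circulant colorings\<close>

definition circulant_coloring :: "nat \<Rightarrow> (nat \<Rightarrow> bool) \<Rightarrow> nat set \<Rightarrow> nat" where
  "circulant_coloring n P e = (if \<exists>x\<in>e. \<exists>y\<in>e. x \<noteq> y \<and> P (circ_dist n x y) then 1 else 2)"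

lemma circulant_coloring_edge:
  "x \<noteq> y \<Longrightarrow> circulant_coloring n P {x, y} = (if P (circ_dist n x y) then 1 else 2)"
  by (auto simp: circulant_coloring_def circ_dist_commute)

lemma two_coloring_circulant_coloring: "two_coloring n (circulant_coloring n P)"
  by (simp add: two_coloring_def circulant_coloring_def)

lemma circulant_coloring_degree:
  assumes "x < n"
  shows "card {y. y < n \<and> y \<noteq> x \<and> circulant_coloring n P {x, y} = 2}
    \<le> card {d. 0 < d \<and> d < n \<and> \<not> P (min d (n - d))}"
proof (rule card_inj_on_le)
  show "inj_on (fwd_dist n x) {y. y < n \<and> y \<noteq> x \<and> circulant_coloring n P {x, y} = 2}"
    by (rule inj_on_subset[OF inj_on_fwd_dist]) auto
  have "fwd_dist n x y \<noteq> 0" if "y < n" "y \<noteq> x" for y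
    using add_fwd_dist_mod[OF \<open>y < n\<close>, of x] assms that by (cases "fwd_dist n x y") auto
  then show "fwd_dist n x ` {y. y < n \<and> y \<noteq> x \<and> circulant_coloring n P {x, y} = 2}
    \<subseteq> {d. 0 < d \<and> d < n \<and> \<not> P (min d (n - d))}"
    using assms by (auto simp: circulant_coloring_edge circ_dist_eq_min fwd_dist_less_modulus split: if_splits)
qed simp

lemma circulant_coloring_embedding_edge:
  assumes "embedding n (circulant_coloring n P) h E 1 \<phi>" "{u, v} \<in> E" "u \<noteq> v" "u < h" "v < h"
  shows "P (circ_dist n (\<phi> u) (\<phi> v))"
proof -
  have "\<phi> u \<noteq> \<phi> v"
    using assms(1,3-5) unfolding embedding_def by (auto simp: inj_on_eq_iff)
  moreover have "circulant_coloring n P {\<phi> u, \<phi> v} = 1"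
    using assms(1,2) unfolding embedding_def by force
  ultimately show ?thesis
    by (simp add: circulant_coloring_edge split: if_splits)
qed

section \<open>The two extremal colorings\<close>

lemma nested_matching_edge: "v < a div 2 \<Longrightarrow> {v, a - 1 - v} \<in> nested_matching a"
  unfolding nested_matching_def by blast

lemma nested_matching_not_near_colored:
  assumes "a = 4 * m + 2"
    and emb: "embedding n (circulant_coloring n (\<lambda>d. d \<le> 2 * m)) a (nested_matching a) 1 \<phi>"
  shows "\<not> cyc_increasing a \<phi>"
proof
  assume cyc: "cyc_increasing a \<phi>"
  have "{m, 3 * m + 1} \<in> nested_matching a"
    using nested_matching_edge[of m a] assms(1) by simp
  then have "circ_dist n (\<phi> m) (\<phi> (3 * m + 1)) \<le> 2 * m"
    using circulant_coloring_embedding_edge[OF emb] assms(1) by simp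
  moreover have "circ_dist a m (3 * m + 1) \<le> circ_dist n (\<phi> m) (\<phi> (3 * m + 1))"
    using cyc_increasing_circ_dist_mono[OF cyc] emb assms(1) unfolding embedding_def by simp
  moreover have "circ_dist a m (3 * m + 1) = 2 * m + 1"
    using assms(1) by (simp add: circ_dist_def fwd_dist_of_le fwd_dist_of_gt)
  ultimately show False by simp
qed

lemma nested_matching_not_far_colored:
  assumes "a = 4 * m" "0 < m" "n + 2 < a + 2 * k"
    and emb: "embedding n (circulant_coloring n (\<lambda>d. k \<le> d)) a (nested_matching a) 1 \<phi>"
  shows "\<not> cyc_increasing a \<phi>"
proof
  assume cyc: "cyc_increasing a \<phi>"
  have range: "\<phi> ` {0..<a} \<subseteq> {0..<n}"
    using emb unfolding embedding_def by blast
  define G where "G i = fwd_dist n (\<phi> i) (\<phi> (Suc i mod a))" for i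
  define i\<^sub>1 i\<^sub>2 where "i\<^sub>1 = 2 * m - 1" and "i\<^sub>2 = 4 * m - 1"
  have succ: "Suc i\<^sub>1 mod a = 2 * m" "Suc i\<^sub>2 mod a = 0"
    using assms(1,2) by (simp_all add: i\<^sub>1_def i\<^sub>2_def)
  have "{i\<^sub>1, 2 * m} \<in> nested_matching a" "{0, i\<^sub>2} \<in> nested_matching a"
    using nested_matching_edge[of i\<^sub>1 a] nested_matching_edge[of 0 a] assms(1,2)
    by (simp_all add: i\<^sub>1_def i\<^sub>2_def)
  then have "k \<le> circ_dist n (\<phi> i\<^sub>1) (\<phi> (2 * m))" "k \<le> circ_dist n (\<phi> 0) (\<phi> i\<^sub>2)"
    using circulant_coloring_embedding_edge[OF emb] assms(1,2) by (simp_all add: i\<^sub>1_def i\<^sub>2_def)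
  moreover have "circ_dist n (\<phi> i\<^sub>1) (\<phi> (2 * m)) \<le> G i\<^sub>1"
    using circ_dist_le_fwd_dist succ(1) unfolding G_def by simp
  moreover have "circ_dist n (\<phi> 0) (\<phi> i\<^sub>2) \<le> G i\<^sub>2"
    using circ_dist_le_fwd_dist[of n "\<phi> i\<^sub>2" "\<phi> 0"] succ(2)
    unfolding G_def by (simp add: circ_dist_commute[of n "\<phi> 0"])
  ultimately have long_gaps: "k \<le> G i\<^sub>1" "k \<le> G i\<^sub>2"
    by linarith+
  have short_gaps: "1 \<le> G i" if "i < a" for i
    using cyc_increasing_fwd_dist_mono[OF cyc range that, of "Suc i mod a"] fwd_dist_Suc_mod[of a i]
      assms(1,2) unfolding G_def by simp
  have "G i\<^sub>1 + G i\<^sub>2 + (a - 2) \<le> (\<Sum>i<a. G i)"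
    using short_gaps assms(1,2) by (intro sum_lessThan_two_terms_le) (simp_all add: i\<^sub>1_def i\<^sub>2_def)
  moreover have "(\<Sum>i<a. G i) = n"
    using cyc_increasing_fwd_dist_sum[OF cyc range] assms(1,2) unfolding G_def by simp
  ultimately show False
    using long_gaps assms(1-3) by linarith
qed

lemma star_embedding_degree:
  assumes "is_star b S" and "embedding n c b S j \<phi>"
  shows "\<exists>x<n. b - 1 \<le> card {y. y < n \<and> y \<noteq> x \<and> c {x, y} = j}"
proof -
  obtain z where z: "z < b" "S = {{z, v} | v. v < b \<and> v \<noteq> z}"
    using assms(1) unfolding is_star_def by blast
  have inj: "inj_on \<phi> {0..<b}" and range: "\<phi> ` {0..<b} \<subseteq> {0..<n}"
    using assms(2) unfolding embedding_def by auto
  have "\<phi> ` ({0..<b} - {z}) \<subseteq> {y. y < n \<and> y \<noteq> \<phi> z \<and> c {\<phi> z, y} = j}"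
  proof
    fix y assume "y \<in> \<phi> ` ({0..<b} - {z})"
    then obtain v where "v \<in> {0..<b} - {z}" "y = \<phi> v" by blast
    then have v: "v < b" "v \<noteq> z" "y = \<phi> v" by auto
    have "{z, v} \<in> S" using z v by blast
    then have "c {\<phi> z, \<phi> v} = j" using assms(2) unfolding embedding_def by force
    moreover have "\<phi> v \<noteq> \<phi> z" using inj v z(1) by (simp add: inj_on_eq_iff)
    ultimately show "y \<in> {y. y < n \<and> y \<noteq> \<phi> z \<and> c {\<phi> z, y} = j}"
      using range v by (auto simp: image_subset_iff)
  qed
  then have "card (\<phi> ` ({0..<b} - {z})) \<le> card {y. y < n \<and> y \<noteq> \<phi> z \<and> c {\<phi> z, y} = j}"
    by (rule card_mono[rotated]) simp
  moreover have "card (\<phi> ` ({0..<b} - {z})) = b - 1"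
    using inj z(1) by (simp add: card_image inj_on_diff)
  moreover have "\<phi> z < n" using range z(1) by (auto simp: image_subset_iff)
  ultimately show ?thesis by auto
qed

lemma star_not_near_colored:
  assumes "is_star b S" "2 \<le> b" "n < 4 * m + b"
  shows "\<not> embedding n (circulant_coloring n (\<lambda>d. d \<le> 2 * m)) b S 2 \<phi>"
proof
  assume "embedding n (circulant_coloring n (\<lambda>d. d \<le> 2 * m)) b S 2 \<phi>"
  then obtain x where "x < n"
    and degree: "b - 1 \<le> card {y. y < n \<and> y \<noteq> x \<and> circulant_coloring n (\<lambda>d. d \<le> 2 * m) {x, y} = 2}"
    using star_embedding_degree[OF assms(1)] by blast
  note degree
  also have "\<dots> \<le> card {d. 0 < d \<and> d < n \<and> \<not> min d (n - d) \<le> 2 * m}"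
    using \<open>x < n\<close> by (rule circulant_coloring_degree)
  also have "\<dots> \<le> card {2 * m + 1..<n - 2 * m}"
    by (intro card_mono) auto
  finally show False
    using assms(2,3) by simp
qed

lemma star_not_far_colored:
  assumes "is_star b S" "0 < k" "2 * k \<le> b"
  shows "\<not> embedding n (circulant_coloring n (\<lambda>d. k \<le> d)) b S 2 \<phi>"
proof
  assume "embedding n (circulant_coloring n (\<lambda>d. k \<le> d)) b S 2 \<phi>"
  then obtain x where "x < n"
    and degree: "b - 1 \<le> card {y. y < n \<and> y \<noteq> x \<and> circulant_coloring n (\<lambda>d. k \<le> d) {x, y} = 2}"
    using star_embedding_degree[OF assms(1)] by blast
  note degree
  also have "\<dots> \<le> card {d. 0 < d \<and> d < n \<and> \<not> k \<le> min d (n - d)}"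
    using \<open>x < n\<close> by (rule circulant_coloring_degree)
  also have "\<dots> \<le> card ({1..<k} \<union> {n + 1 - k..<n})"
    by (intro card_mono) auto
  also have "\<dots> \<le> card {1..<k} + card {n + 1 - k..<n}"
    by (rule card_Un_le)
  finally show False
    using assms(2,3) by simp
qed

lemma near_circulant_bad_coloring:
  assumes "a = 4 * m + 2" "is_star b S" "2 \<le> b" "n + 2 < a + b"
  shows "bad_coloring n (circulant_coloring n (\<lambda>d. d \<le> 2 * m)) a (nested_matching a) b S"
  unfolding bad_coloring_def
  using two_coloring_circulant_coloring nested_matching_not_near_colored[OF assms(1)]
    star_not_near_colored[OF assms(2,3)] assms(1,4)
  by auto

lemma far_circulant_bad_coloring:
  assumes "a = 4 * m" "0 < m" "b = 2 * k" "0 < k" "is_star b S" "n + 2 < a + b"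
  shows "bad_coloring n (circulant_coloring n (\<lambda>d. k \<le> d)) a (nested_matching a) b S"
  unfolding bad_coloring_def
  using two_coloring_circulant_coloring nested_matching_not_far_colored[OF assms(1,2)]
    star_not_far_colored[OF assms(5,4)] assms(3,6)
  by auto

theorem proposition4p35:
  fixes a b :: nat and S :: "nat set set"
  assumes "even a" and "a \<ge> 2" and "b \<ge> 2"
    and "a mod 4 = 2 \<or> even b"
    and "is_star b S"
  shows "a + b - 2 \<le> Rcyc a (nested_matching a) b S"
proof -
  define n where "n = a + b - 3"
  have "n + 2 < a + b"
    using assms(2,3) by (simp add: n_def)
  obtain c where "bad_coloring n c a (nested_matching a) b S"
  proof (cases "a mod 4 = 2")
    case True
    then have "a = 4 * (a div 4) + 2"
      by presburger
    then show ?thesis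
      using that near_circulant_bad_coloring assms(3,5) \<open>n + 2 < a + b\<close> by blast
  next
    case False
    then have "a = 4 * (a div 4)" "0 < a div 4" "b = 2 * (b div 2)" "0 < b div 2"
      using assms(1-4) by presburger+
    then show ?thesis
      using that far_circulant_bad_coloring assms(5) \<open>n + 2 < a + b\<close> by blast
  qed
  then have "n < Rcyc a (nested_matching a) b S"
    using simple_graph_nested_matching simple_graph_star[OF assms(5)] assms(2,3)
    by (intro less_Rcyc) auto
  then show ?thesis
    by (simp add: n_def)
qed

end
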